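(* Let $p\in[0,1)$, $\alpha\in[0,1]$, $0\le h_1<\dots<h_N\le1$, and nonnegative weights $f_0^S(h_j),f_0^{NS}(h_j)$, $j=1,\dots,N$, each summing to $1$; set $f_0(h_j)=\alpha f_0^S(h_j)+(1-\alpha)f_0^{NS}(h_j)$ with $f_0(h_N)>0$, and $f_0([h_i,1])=\sum_{j\ge i}f_0(h_j)$. Let $A=(A_{ij})_{i,j=1}^N$ be the matrix $$A_{ij}=\begin{cases}(1-\alpha)f_0^{NS}(h_i)-\big(p+(1-p)f_0([h_i,1])\big),& i=j,\\ (1-\alpha)\big[p+(1-p)1_{\{j\ge i\}}\big]f_0^{NS}(h_j),& i\ne j.\end{cases}$$ Then every eigenvalue $z\in\mathbb{C}$ of $A$ satisfies $\mathrm{Re}\,z\le-p\alpha-(1-p)\alpha f_0^S(h_N)$.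
   Context: $A$ is the matrix of the linear ODE system satisfied by the mean opinions of non-stubborn individuals at each hierarchy level; $\alpha$ is the fraction of stubborn individuals, $f_0^S(h_j)$ and $f_0^{NS}(h_j)$ the proportions of level $h_j$ within the stubborn and non-stubborn populations. *)

theory Defs
  imports Complex_Main "Jordan_Normal_Form.Char_Poly"
begin

text \<open>Levels are indexed 0..N-1 (paper: 1..N). f0 j = alpha fS j + (1-alpha) fNS j.\<close>

definition f0 :: "real \<Rightarrow> (nat \<Rightarrow> real) \<Rightarrow> (nat \<Rightarrow> real) \<Rightarrow> nat \<Rightarrow> real" where
  "f0 \<alpha> fS fNS j = \<alpha> * fS j + (1 - \<alpha>) * fNS j"

definition f0_tail :: "nat \<Rightarrow> real \<Rightarrow> (nat \<Rightarrow> real) \<Rightarrow> (nat \<Rightarrow> real) \<Rightarrow> nat \<Rightarrow> real" where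
  "f0_tail N \<alpha> fS fNS i = (\<Sum>j\<in>{i..<N}. f0 \<alpha> fS fNS j)"

definition opinion_matrix ::
  "nat \<Rightarrow> real \<Rightarrow> real \<Rightarrow> (nat \<Rightarrow> real) \<Rightarrow> (nat \<Rightarrow> real) \<Rightarrow> real mat" where
  "opinion_matrix N p \<alpha> fS fNS = mat N N (\<lambda>(i, j).
     if i = j then (1 - \<alpha>) * fNS i - (p + (1 - p) * f0_tail N \<alpha> fS fNS i)
     else (1 - \<alpha>) * (p + (1 - p) * (if j \<ge> i then 1 else 0)) * fNS j)"

end

theory Submission
  imports Defs
begin

text \<open>
  Off the diagonal the matrix \<open>A\<close> is nonnegative. If \<open>A v = z v\<close> with \<open>v \<noteq> 0\<close> and \<open>i\<close> is a
  coordinate of maximal modulus, the \<open>i\<close>-th row gives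
  \<open>|z - A\<^sub>i\<^sub>i| |v\<^sub>i| \<le> \<Sum>\<^sub>j\<^sub>\<noteq>\<^sub>i A\<^sub>i\<^sub>j |v\<^sub>j| \<le> (\<Sum>\<^sub>j\<^sub>\<noteq>\<^sub>i A\<^sub>i\<^sub>j) |v\<^sub>i|\<close>, hence \<open>Re z \<le> \<Sum>\<^sub>j A\<^sub>i\<^sub>j\<close>
  (a one-sided Gershgorin estimate). Since \<open>f\<^sub>0\<^sup>N\<^sup>S\<close> sums to one, the \<open>i\<close>-th row sum of \<open>A\<close>
  is \<open>-p\<alpha> - (1-p)\<alpha> f\<^sub>0\<^sup>S([h\<^sub>i,1])\<close>, and \<open>f\<^sub>0\<^sup>S([h\<^sub>i,1]) \<ge> f\<^sub>0\<^sup>S(h\<^sub>N)\<close>.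
\<close>

lemma Re_le_row_sum_at_max_component:
  fixes a :: "'i \<Rightarrow> real" and v :: "'i \<Rightarrow> complex" and z :: complex
  assumes "finite I" and "i \<in> I"
    and off_diag_nonneg: "\<And>j. j \<in> I \<Longrightarrow> j \<noteq> i \<Longrightarrow> 0 \<le> a j"
    and row_eq: "(\<Sum>j\<in>I. of_real (a j) * v j) = z * v i"
    and max_component: "\<And>j. j \<in> I \<Longrightarrow> cmod (v j) \<le> cmod (v i)"
    and "v i \<noteq> 0"
  shows "Re z \<le> (\<Sum>j\<in>I. a j)"
proof -
  let ?J = "I - {i}"
  have "(z - of_real (a i)) * v i = (\<Sum>j\<in>?J. of_real (a j) * v j)"
    using row_eq sum.remove[OF assms(1,2), of "\<lambda>j. of_real (a j) * v j"]
    by (simp add: algebra_simps)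
  then have "(Re z - a i) * cmod (v i) \<le> cmod (\<Sum>j\<in>?J. of_real (a j) * v j)"
    by (metis complex_Re_le_cmod minus_complex.sel(1) Re_complex_of_real mult_right_mono
        norm_ge_zero norm_mult)
  also have "\<dots> \<le> (\<Sum>j\<in>?J. a j * cmod (v j))"
    using norm_sum[of "\<lambda>j. of_real (a j) * v j" ?J] off_diag_nonneg by (simp add: norm_mult)
  also have "\<dots> \<le> (\<Sum>j\<in>?J. a j) * cmod (v i)"
    unfolding sum_distrib_right
    by (intro sum_mono mult_left_mono) (auto simp: off_diag_nonneg max_component)
  finally have "Re z - a i \<le> (\<Sum>j\<in>?J. a j)"
    using \<open>v i \<noteq> 0\<close> by simp
  then show ?thesis
    using sum.remove[OF assms(1,2), of a] by simp
qed

lemma eigenvalue_Re_le_row_sum_if_off_diag_nonneg: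
  fixes A :: "real mat" and z :: complex
  assumes A: "A \<in> carrier_mat n n"
    and off_diag_nonneg: "\<And>i j. i < n \<Longrightarrow> j < n \<Longrightarrow> i \<noteq> j \<Longrightarrow> 0 \<le> A $$ (i, j)"
    and "eigenvalue (map_mat complex_of_real A) z"
  shows "\<exists>i<n. Re z \<le> (\<Sum>j<n. A $$ (i, j))"
proof -
  obtain v where v: "v \<in> carrier_vec n" "v \<noteq> 0\<^sub>v n"
    and eigen: "map_mat complex_of_real A *\<^sub>v v = z \<cdot>\<^sub>v v"
    using assms(3) A unfolding eigenvalue_def eigenvector_def by auto
  have "n \<noteq> 0"
    using v by auto
  define m where "m = Max ((\<lambda>j. cmod (v $ j)) ` {..<n})"
  have "m \<in> (\<lambda>j. cmod (v $ j)) ` {..<n}"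
    unfolding m_def using \<open>n \<noteq> 0\<close> by (intro Max_in) auto
  then obtain i where i: "i < n" "cmod (v $ i) = m"
    by auto
  have max_component: "cmod (v $ j) \<le> cmod (v $ i)" if "j < n" for j
    using that i(2) unfolding m_def by (simp add: Max_ge)
  have "v $ i \<noteq> 0"
  proof
    assume "v $ i = 0"
    then have "v = 0\<^sub>v n"
      using v(1) max_component by (intro eq_vecI) fastforce+
    with v(2) show False ..
  qed
  have row_eq: "(\<Sum>j<n. of_real (A $$ (i, j)) * v $ j) = z * v $ i"
  proof -
    have "(map_mat complex_of_real A *\<^sub>v v) $ i = z * v $ i"
      using eigen v(1) i(1) by simp
    then show ?thesis
      using A v(1) i(1) by (simp add: scalar_prod_def lessThan_atLeast0 mult.commute)
  qed
  have "Re z \<le> (\<Sum>j<n. A $$ (i, j))"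
    by (rule Re_le_row_sum_at_max_component[where v = "\<lambda>j. v $ j"])
      (use i off_diag_nonneg row_eq max_component \<open>v $ i \<noteq> 0\<close> in auto)
  with i(1) show ?thesis by blast
qed

lemma opinion_matrix_carrier: "opinion_matrix N p \<alpha> fS fNS \<in> carrier_mat N N"
  by (simp add: opinion_matrix_def)

lemma opinion_matrix_entry:
  assumes "i < N" "j < N"
  shows "opinion_matrix N p \<alpha> fS fNS $$ (i, j) =
    (1 - \<alpha>) * (p + (1 - p) * (if i \<le> j then 1 else 0)) * fNS j
    - (if i = j then p + (1 - p) * f0_tail N \<alpha> fS fNS i else 0)"
  using assms by (simp add: opinion_matrix_def)

lemma opinion_matrix_off_diag_nonneg:
  assumes "0 \<le> p" "p \<le> 1" "\<alpha> \<le> 1" "0 \<le> fNS j" "i < N" "j < N" "i \<noteq> j"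
  shows "0 \<le> opinion_matrix N p \<alpha> fS fNS $$ (i, j)"
  using assms by (simp add: opinion_matrix_entry)

lemma opinion_matrix_row_sum:
  assumes "i < N" and fNS_sum: "(\<Sum>j<N. fNS j) = 1"
  shows "(\<Sum>j<N. opinion_matrix N p \<alpha> fS fNS $$ (i, j)) =
    - p * \<alpha> - (1 - p) * \<alpha> * (\<Sum>j\<in>{i..<N}. fS j)"
proof -
  have tail: "(\<Sum>j<N. if i \<le> j then g j else 0) = (\<Sum>j\<in>{i..<N}. g j)" for g :: "nat \<Rightarrow> real"
    by (simp add: sum.inter_filter[symmetric]) (intro sum.cong, auto)
  have "(\<Sum>j<N. opinion_matrix N p \<alpha> fS fNS $$ (i, j)) =
      (\<Sum>j<N. (1 - \<alpha>) * (p + (1 - p) * (if i \<le> j then 1 else 0)) * fNS j)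
      - (p + (1 - p) * f0_tail N \<alpha> fS fNS i)"
    using \<open>i < N\<close> by (simp add: opinion_matrix_entry sum_subtractf)
  also have "(\<Sum>j<N. (1 - \<alpha>) * (p + (1 - p) * (if i \<le> j then 1 else 0)) * fNS j) =
      (1 - \<alpha>) * p * (\<Sum>j<N. fNS j) + (1 - \<alpha>) * (1 - p) * (\<Sum>j<N. if i \<le> j then fNS j else 0)"
    unfolding sum_distrib_left sum.distrib[symmetric] by (intro sum.cong) (auto simp: algebra_simps)
  also have "f0_tail N \<alpha> fS fNS i = \<alpha> * (\<Sum>j\<in>{i..<N}. fS j) + (1 - \<alpha>) * (\<Sum>j\<in>{i..<N}. fNS j)"
    by (simp add: f0_tail_def f0_def sum.distrib sum_distrib_left)
  finally show ?thesis
    by (simp add: tail fNS_sum algebra_simps)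
qed

theorem proposition4p5:
  fixes N :: nat and p \<alpha> :: real and h fS fNS :: "nat \<Rightarrow> real" and z :: complex
  assumes hp: "0 \<le> p" "p < 1"
    and h\<alpha>: "0 \<le> \<alpha>" "\<alpha> \<le> 1"
    and hh0: "0 < N \<Longrightarrow> 0 \<le> h 0"
    and hh1: "0 < N \<Longrightarrow> h (N - 1) \<le> 1"
    and hmono: "\<And>i j. i < j \<Longrightarrow> j < N \<Longrightarrow> h i < h j"
    and hfS: "\<And>j. j < N \<Longrightarrow> 0 \<le> fS j" "(\<Sum>j<N. fS j) = 1"
    and hfNS: "\<And>j. j < N \<Longrightarrow> 0 \<le> fNS j" "(\<Sum>j<N. fNS j) = 1"
    and hpos: "f0 \<alpha> fS fNS (N - 1) > 0"
    and heig: "eigenvalue (map_mat complex_of_real (opinion_matrix N p \<alpha> fS fNS)) z"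
  shows "Re z \<le> - p * \<alpha> - (1 - p) * \<alpha> * fS (N - 1)"
proof -
  have "0 \<le> opinion_matrix N p \<alpha> fS fNS $$ (i, j)" if "i < N" "j < N" "i \<noteq> j" for i j
    using opinion_matrix_off_diag_nonneg that hp h\<alpha> hfNS(1) by simp
  then obtain i where "i < N" and Re_z: "Re z \<le> (\<Sum>j<N. opinion_matrix N p \<alpha> fS fNS $$ (i, j))"
    using eigenvalue_Re_le_row_sum_if_off_diag_nonneg[OF opinion_matrix_carrier _ heig] by blast
  have "fS (N - 1) \<le> (\<Sum>j\<in>{i..<N}. fS j)"
    using \<open>i < N\<close> hfS(1) by (intro member_le_sum) auto
  then have "(1 - p) * \<alpha> * fS (N - 1) \<le> (1 - p) * \<alpha> * (\<Sum>j\<in>{i..<N}. fS j)"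
    using hp h\<alpha> by (intro mult_left_mono) auto
  with Re_z show ?thesis
    using opinion_matrix_row_sum[OF \<open>i < N\<close> hfNS(2)] by simp
qed

end
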